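(* Let $1\le k<n$ and $A\in\mathbb{H}_n$. The following are equivalent: (a) $A=\gamma I$ for some $\gamma\in\mathbb{R}$; (b) $A\parallel B$ for every $B\in\mathbb{H}_n$; (c) $A\parallel P$ for every rank-$k$ orthogonal projection $P\in\mathbb{H}_n$.
   Context: $\mathbb{H}_n$ is the real space of $n\times n$ Hermitian matrices. $w_k(A)=\max\{|\operatorname{tr}(AP)|: P=P^*=P^2,\operatorname{tr}P=k\}$. For $A,B\in\mathbb{H}_n$, $A\parallel B$ means $w_k(A+\mu B)=w_k(A)+w_k(B)$ for some $\mu\in\{1,-1\}$. *)

theory Defs
  imports "HOL-Analysis.Analysis"
begin

definition hermitian :: "complex^'n^'n \<Rightarrow> bool" where
  "hermitian A \<longleftrightarrow> (\<forall>i j. A$i$j = cnj (A$j$i))"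

definition orth_proj :: "complex^'n^'n \<Rightarrow> bool" where
  "orth_proj P \<longleftrightarrow> hermitian P \<and> P ** P = P"

definition wk :: "nat \<Rightarrow> complex^'n^'n \<Rightarrow> real" where
  "wk k A = Sup {cmod (trace (A ** P)) | P. orth_proj P \<and> trace P = of_nat k}"

definition wk_parallel :: "nat \<Rightarrow> complex^'n^'n \<Rightarrow> complex^'n^'n \<Rightarrow> bool" where
  "wk_parallel k A B \<longleftrightarrow> (\<exists>\<mu>\<in>{1, -1::real}. wk k (A + \<mu> *\<^sub>R B) = wk k A + wk k B)"

end

theory Submission
  imports Defs
begin

text \<open>For a scalar matrix \<open>\<gamma>I\<close> one has \<open>tr(\<gamma>I Q) = \<gamma>k\<close> for every trace-\<open>k\<close> projection \<open>Q\<close>, so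
  \<open>w\<^sub>k(\<gamma>I \<plusminus> B)\<close> is attained where \<open>w\<^sub>k(B)\<close> is, with the sign chosen so that nothing cancels.
  Conversely, \<open>w\<^sub>k(P) = k\<close> for a rank-\<open>k\<close> projection \<open>P\<close>, and \<open>tr(PQ) \<le> k\<close> with equality only
  for \<open>Q = P\<close>; hence \<open>A \<parallel> P\<close> forces \<open>|tr(AP)| = w\<^sub>k(A)\<close>. Testing this with
  \<open>P = \<Sum>\<^sub>a\<^sub>\<in>\<^sub>S e\<^sub>a e\<^sub>a\<^sup>* + u u\<^sup>*/|u|\<^sup>2\<close>, \<open>|S| = k - 1\<close>, \<open>u = p e\<^sub>i + q e\<^sub>j\<close>, shows that the real quadratic
  form \<open>u\<^sup>* A u / |u|\<^sup>2\<close> shifted by \<open>\<Sum>\<^sub>a\<^sub>\<in>\<^sub>S a\<^sub>a\<^sub>a\<close> has constant modulus; five choices of \<open>(p, q)\<close>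
  then force \<open>a\<^sub>i\<^sub>i = a\<^sub>j\<^sub>j\<close> and \<open>a\<^sub>i\<^sub>j = 0\<close>.\<close>

definition conj_transpose :: "complex^'n^'m \<Rightarrow> complex^'m^'n" where
  "conj_transpose X = (\<chi> a b. cnj (X$b$a))"

lemma hermitian_iff_conj_transpose: "hermitian X \<longleftrightarrow> conj_transpose X = X"
  unfolding hermitian_def conj_transpose_def vec_eq_iff vec_lambda_beta by metis

lemma conj_transpose_mult: "conj_transpose (X ** Y) = conj_transpose Y ** conj_transpose X"
  by (simp add: conj_transpose_def matrix_matrix_mult_def vec_eq_iff mult.commute)

lemma conj_transpose_add: "conj_transpose (X + Y) = conj_transpose X + conj_transpose Y"
  by (simp add: conj_transpose_def vec_eq_iff)

lemma conj_transpose_diff: "conj_transpose (X - Y) = conj_transpose X - conj_transpose Y"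
  by (simp add: conj_transpose_def vec_eq_iff)

lemma conj_transpose_mat_1: "conj_transpose (mat 1) = mat 1"
  by (simp add: conj_transpose_def vec_eq_iff mat_def)

lemma trace_conj_transpose: "trace (conj_transpose X) = cnj (trace X)"
  by (simp add: trace_def conj_transpose_def)

lemma trace_mult_conj_transpose:
  "trace (X ** conj_transpose X) = complex_of_real (\<Sum>a\<in>UNIV. \<Sum>b\<in>UNIV. (cmod (X$a$b))\<^sup>2)"
  by (simp add: trace_def conj_transpose_def matrix_matrix_mult_def complex_norm_square
      del: of_real_power)

lemma trace_mult_conj_transpose_eq_0_iff: "trace (X ** conj_transpose X) = 0 \<longleftrightarrow> X = 0"
proof
  assume "trace (X ** conj_transpose X) = 0"
  then have "(\<Sum>a\<in>UNIV. \<Sum>b\<in>UNIV. (cmod (X$a$b))\<^sup>2) = 0"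
    by (simp only: trace_mult_conj_transpose of_real_eq_0_iff)
  then have "\<forall>a b. (cmod (X$a$b))\<^sup>2 = 0"
    by (simp add: sum_nonneg_eq_0_iff sum_nonneg)
  then show "X = 0" by (simp add: vec_eq_iff)
qed (simp add: trace_def)

lemma trace_mult_conj_transpose_nonneg:
  "Im (trace (X ** conj_transpose X)) = 0" "Re (trace (X ** conj_transpose X)) \<ge> 0"
  by (auto simp: trace_mult_conj_transpose intro!: sum_nonneg)

lemma trace_mult_hermitian_real:
  assumes "hermitian B" "hermitian Q"
  shows "Im (trace (B ** Q)) = 0"
proof -
  have "cnj (trace (B ** Q)) = trace (Q ** B)"
    using assms by (simp add: trace_conj_transpose[symmetric] conj_transpose_mult
        hermitian_iff_conj_transpose)
  also have "\<dots> = trace (B ** Q)" by (rule trace_mul_sym)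
  finally show ?thesis by (metis Reals_cnj_iff complex_is_Real_iff)
qed

lemma matrix_add_rdistrib: "((Y::'a::semiring_1^'n^'m) + Z) ** X = Y ** X + Z ** X"
  by (simp add: matrix_matrix_mult_def vec_eq_iff sum.distrib distrib_right)

lemma matrix_diff_ldistrib: "(X::'a::ring_1^'n^'m) ** (Y - Z) = X ** Y - X ** Z"
  by (simp add: matrix_matrix_mult_def vec_eq_iff sum_subtractf right_diff_distrib)

lemma matrix_diff_rdistrib: "((Y::'a::ring_1^'n^'m) - Z) ** X = Y ** X - Z ** X"
  by (simp add: matrix_matrix_mult_def vec_eq_iff sum_subtractf left_diff_distrib)

lemma matrix_scaleR_mult_left: "((c::real) *\<^sub>R (Y::'a::real_algebra_1^'n^'m)) ** X = c *\<^sub>R (Y ** X)"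
  by (simp add: matrix_matrix_mult_def vec_eq_iff scaleR_sum_right)

lemma trace_scaleR: "trace ((c::real) *\<^sub>R (Y::'a::real_algebra_1^'n^'n)) = c *\<^sub>R trace Y"
  by (simp add: trace_def scaleR_sum_right)

lemma trace_mat_mult: "trace (mat c ** (Q::'a::comm_semiring_1^'n^'n)) = c * trace Q"
  by (simp add: trace_def matrix_matrix_mult_def mat_def if_distrib if_distribR
      sum_distrib_left cong: if_cong)

lemma orth_proj_iff_conj_transpose: "orth_proj P \<longleftrightarrow> conj_transpose P = P \<and> P ** P = P"
  by (simp add: orth_proj_def hermitian_iff_conj_transpose)

lemma orth_proj_compl: "orth_proj Q \<Longrightarrow> orth_proj (mat 1 - Q)"
  by (simp add: orth_proj_iff_conj_transpose conj_transpose_diff conj_transpose_mat_1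
      matrix_diff_ldistrib matrix_diff_rdistrib)

lemma trace_orth_proj_mult:
  assumes "orth_proj P" "orth_proj Q"
  shows "trace (P ** Q) = trace ((P ** Q) ** conj_transpose (P ** Q))"
proof -
  have P: "conj_transpose P = P" "P ** P = P" and Q: "conj_transpose Q = Q" "Q ** Q = Q"
    using assms by (auto simp: orth_proj_iff_conj_transpose)
  have "(P ** Q) ** conj_transpose (P ** Q) = (P ** Q) ** (Q ** P)"
    by (simp only: conj_transpose_mult P Q)
  also have "\<dots> = P ** (Q ** P)"
    by (metis Q(2) matrix_mul_assoc)
  finally have "trace ((P ** Q) ** conj_transpose (P ** Q)) = trace (P ** (Q ** P))"
    by simp
  also have "\<dots> = trace ((Q ** P) ** P)"
    by (simp only: Q trace_mul_sym[of P])
  also have "\<dots> = trace (P ** Q)"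
    by (simp only: P trace_mul_sym[of Q] matrix_mul_assoc[symmetric])
  finally show ?thesis by simp
qed

lemma trace_orth_proj_mult_nonneg:
  assumes "orth_proj P" "orth_proj Q"
  shows "Im (trace (P ** Q)) = 0" "Re (trace (P ** Q)) \<ge> 0"
  by (simp_all only: trace_orth_proj_mult[OF assms] trace_mult_conj_transpose_nonneg)

lemma Re_trace_orth_proj_mult_le:
  assumes "orth_proj P" "orth_proj Q"
  shows "Re (trace (P ** Q)) \<le> Re (trace P)"
  using trace_orth_proj_mult_nonneg(2)[OF assms(1) orth_proj_compl[OF assms(2)]]
  by (simp add: matrix_diff_ldistrib trace_sub)

text \<open>Equality in the previous bound forces \<open>P (1 - Q) = 0\<close>, because \<open>tr (X X\<^sup>*)\<close> is the
  squared Frobenius norm.\<close>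
lemma orth_proj_eqI:
  assumes "orth_proj P" "orth_proj Q" "trace (P ** Q) = trace P" "trace (P ** Q) = trace Q"
  shows "P = Q"
proof -
  have "trace (P ** (mat 1 - Q)) = 0" using assms(3) by (simp add: matrix_diff_ldistrib trace_sub)
  then have "P ** (mat 1 - Q) = 0"
    using trace_orth_proj_mult[OF assms(1) orth_proj_compl[OF assms(2)]]
    by (simp add: trace_mult_conj_transpose_eq_0_iff)
  moreover have "trace ((mat 1 - P) ** Q) = 0"
    using assms(4) by (simp add: matrix_diff_rdistrib trace_sub)
  then have "(mat 1 - P) ** Q = 0"
    using trace_orth_proj_mult[OF orth_proj_compl[OF assms(1)] assms(2)]
    by (simp add: trace_mult_conj_transpose_eq_0_iff)
  ultimately show ?thesis by (simp add: matrix_diff_ldistrib matrix_diff_rdistrib)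
qed

lemma norm_orth_proj_entry_le_1:
  assumes "orth_proj Q"
  shows "cmod (Q$a$b) \<le> 1"
proof -
  have Q: "Q$l$a = cnj (Q$a$l)" "Q ** Q = Q" for l
    using assms unfolding orth_proj_def hermitian_def by blast+
  define s where "s = (\<Sum>l\<in>UNIV. (cmod (Q$a$l))\<^sup>2)"
  have s_nonneg: "s \<ge> 0" unfolding s_def by (rule sum_nonneg) simp
  have row_le: "(cmod (Q$a$l))\<^sup>2 \<le> s" for l
    unfolding s_def by (rule member_le_sum) auto
  have "Q$a$a = (\<Sum>l\<in>UNIV. Q$a$l * Q$l$a)"
    by (subst Q(2)[symmetric]) (simp add: matrix_matrix_mult_def)
  also have "\<dots> = complex_of_real s"
    unfolding s_def Q(1) by (simp add: complex_norm_square del: of_real_power)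
  finally have diag: "Q$a$a = complex_of_real s" .
  have "s\<^sup>2 \<le> s" using row_le[of a] unfolding diag by (simp add: s_nonneg)
  then have "s \<le> 1"
  proof (rule contrapos_pp)
    assume "\<not> s \<le> 1"
    then have "s * 1 < s * s" by (intro mult_strict_left_mono) auto
    then show "\<not> s\<^sup>2 \<le> s" by (simp add: power2_eq_square)
  qed
  then have "(cmod (Q$a$b))\<^sup>2 \<le> 1\<^sup>2" using row_le[of b] by simp
  then show ?thesis by (rule power2_le_imp_le) simp
qed

lemma norm_vec_le_sum: "norm (x::'a::real_normed_vector^'n) \<le> (\<Sum>i\<in>UNIV. norm (x$i))"
  unfolding norm_vec_def by (rule L2_set_le_sum) simp

definition projs_of_trace :: "nat \<Rightarrow> (complex^'n^'n) set" where
  "projs_of_trace k = {Q. orth_proj Q \<and> trace Q = of_nat k}"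

lemma compact_projs_of_trace: "compact (projs_of_trace k)"
proof (rule compact_eq_bounded_closed[THEN iffD2], rule conjI)
  have "norm Q \<le> real CARD('n) * real CARD('n)" if "Q \<in> projs_of_trace k" for Q :: "complex^'n^'n"
  proof -
    have "norm Q \<le> (\<Sum>a\<in>UNIV. \<Sum>b\<in>UNIV. norm (Q$a$b))"
      by (rule order_trans[OF norm_vec_le_sum]) (simp add: sum_mono norm_vec_le_sum)
    also have "\<dots> \<le> (\<Sum>a\<in>(UNIV::'n set). \<Sum>b\<in>(UNIV::'n set). 1)"
      using that by (intro sum_mono) (simp add: projs_of_trace_def norm_orth_proj_entry_le_1)
    finally show ?thesis by simp
  qed
  then show "bounded (projs_of_trace k)"
    unfolding bounded_iff by blast
  have projs: "projs_of_trace k = {Q. (\<forall>a b. (Q ** Q)$a$b = Q$a$b) \<and> (\<forall>a b. Q$a$b = cnj (Q$b$a))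
      \<and> trace Q = of_nat k}"
    by (auto simp: projs_of_trace_def orth_proj_def hermitian_def vec_eq_iff)
  show "closed (projs_of_trace k)" unfolding projs matrix_matrix_mult_def trace_def
    by (intro closed_Collect_conj closed_Collect_all closed_Collect_eq continuous_intros)
qed

lemma wk_eq_Sup: "wk k A = Sup ((\<lambda>Q. cmod (trace (A ** Q))) ` projs_of_trace k)"
  unfolding wk_def projs_of_trace_def by (rule arg_cong[where f=Sup]) blast

lemma continuous_on_norm_trace_mult: "continuous_on S (\<lambda>Q. cmod (trace (A ** Q)))"
  unfolding trace_def matrix_matrix_mult_def by (intro continuous_intros)

lemma norm_trace_mult_le_wk:
  assumes "Q \<in> projs_of_trace k"
  shows "cmod (trace (A ** Q)) \<le> wk k A"
proof -
  have "compact ((\<lambda>Q. cmod (trace (A ** Q))) ` projs_of_trace k)"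
    by (intro compact_continuous_image continuous_on_norm_trace_mult compact_projs_of_trace)
  then show ?thesis unfolding wk_eq_Sup using assms
    by (intro cSup_upper bounded_imp_bdd_above compact_imp_bounded) auto
qed

lemma wk_attained:
  assumes "projs_of_trace k \<noteq> ({} :: (complex^'n^'n) set)"
  obtains Q :: "complex^'n^'n" where "Q \<in> projs_of_trace k" "wk k A = cmod (trace (A ** Q))"
proof -
  obtain Q where Q: "Q \<in> projs_of_trace k"
    and max: "\<forall>Q'\<in>projs_of_trace k. cmod (trace (A ** Q')) \<le> cmod (trace (A ** Q))"
    using continuous_attains_sup[OF compact_projs_of_trace assms continuous_on_norm_trace_mult]
    by blast
  show thesis
  proof (rule that[OF Q])
    show "wk k A = cmod (trace (A ** Q))"
      unfolding wk_eq_Sup by (rule cSup_eq_maximum) (use Q max in auto)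
  qed
qed

lemma wk_eqI:
  assumes "Q \<in> projs_of_trace k" "cmod (trace (A ** Q)) = c"
    and "\<And>Q. Q \<in> projs_of_trace k \<Longrightarrow> cmod (trace (A ** Q)) \<le> c"
  shows "wk k A = c"
  unfolding wk_eq_Sup by (rule cSup_eq_maximum) (use assms in auto)

lemma wk_orth_proj:
  fixes P :: "complex^'n^'n"
  assumes "P \<in> projs_of_trace k"
  shows "wk k P = real k"
proof (rule wk_eqI[OF assms])
  have P: "orth_proj P" "trace P = of_nat k" using assms by (auto simp: projs_of_trace_def)
  then show "cmod (trace (P ** P)) = real k" by (simp add: orth_proj_def)
  fix Q :: "complex^'n^'n" assume "Q \<in> projs_of_trace k"
  then have Q: "orth_proj Q" by (simp add: projs_of_trace_def)
  have "cmod (trace (P ** Q)) = Re (trace (P ** Q))"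
    using trace_orth_proj_mult_nonneg[OF P(1) Q] by (simp add: cmod_eq_Re)
  also have "\<dots> \<le> real k" using Re_trace_orth_proj_mult_le[OF P(1) Q] P(2) by simp
  finally show "cmod (trace (P ** Q)) \<le> real k" .
qed

lemma trace_add_scaleR_mult:
  fixes A B Q :: "complex^'n^'n"
  shows "trace ((A + \<mu> *\<^sub>R B) ** Q) = trace (A ** Q) + \<mu> *\<^sub>R trace (B ** Q)"
  by (simp add: matrix_add_rdistrib matrix_scaleR_mult_left trace_add trace_scaleR)

text \<open>If \<open>w\<^sub>k(A \<plusminus> P) = w\<^sub>k(A) + k\<close>, a maximizer \<open>Q\<close> of \<open>A \<plusminus> P\<close> must satisfy \<open>tr(PQ) = k\<close>,
  hence \<open>Q = P\<close>, so \<open>P\<close> itself attains \<open>w\<^sub>k(A)\<close>.\<close>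
lemma wk_parallel_orth_proj_attains:
  assumes P: "P \<in> projs_of_trace k" and par: "wk_parallel k A P"
  shows "cmod (trace (A ** P)) = wk k A"
proof -
  have P': "orth_proj P" "trace P = of_nat k" using P by (auto simp: projs_of_trace_def)
  obtain \<mu> :: real where "\<mu> \<in> {1, -1}" and "wk k (A + \<mu> *\<^sub>R P) = wk k A + wk k P"
    using par unfolding wk_parallel_def by blast
  then have \<mu>: "\<bar>\<mu>\<bar> = 1" and additive: "wk k (A + \<mu> *\<^sub>R P) = wk k A + real k"
    using wk_orth_proj[OF P] by auto
  obtain Q where Q: "Q \<in> projs_of_trace k" and wQ: "wk k (A + \<mu> *\<^sub>R P) = cmod (trace ((A + \<mu> *\<^sub>R P) ** Q))"
    using wk_attained P by blast
  have Q': "orth_proj Q" "trace Q = of_nat k" using Q by (auto simp: projs_of_trace_def)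
  have triangle: "wk k A + real k \<le> cmod (trace (A ** Q)) + cmod (trace (P ** Q))"
  proof -
    have "wk k A + real k = cmod (trace ((A + \<mu> *\<^sub>R P) ** Q))" using additive wQ by linarith
    also have "\<dots> \<le> cmod (trace (A ** Q)) + cmod (\<mu> *\<^sub>R trace (P ** Q))"
      unfolding trace_add_scaleR_mult by (rule norm_triangle_ineq)
    finally show ?thesis using \<mu> by simp
  qed
  define t where "t = trace (P ** Q)"
  have "Im t = 0" "Re t \<ge> 0" "Re t \<le> real k"
    using trace_orth_proj_mult_nonneg[OF P'(1) Q'(1)] Re_trace_orth_proj_mult_le[OF P'(1) Q'(1)]
    by (simp_all add: t_def P'(2))
  moreover have "real k \<le> cmod t"
    using triangle norm_trace_mult_le_wk[OF Q, where A=A] by (simp add: t_def)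
  ultimately have "t = of_nat k" by (simp add: complex_eq_iff cmod_eq_Re)
  then have "P = Q" using orth_proj_eqI[OF P'(1) Q'(1)] by (simp add: t_def P'(2) Q'(2))
  then have "wk k A + real k \<le> cmod (trace (A ** P)) + real k"
    using triangle \<open>t = of_nat k\<close> by (simp add: t_def)
  then show ?thesis using norm_trace_mult_le_wk[OF P, where A=A] by simp
qed

lemma abs_add_of_mult_nonneg: "(x::real) * y \<ge> 0 \<Longrightarrow> \<bar>x + y\<bar> = \<bar>x\<bar> + \<bar>y\<bar>"
  by (cases "x \<ge> 0"; cases "y \<ge> 0") (auto simp: zero_le_mult_iff)

lemma wk_parallel_scalar_matrix:
  fixes B :: "complex^'n^'n"
  assumes "hermitian B" and "projs_of_trace k \<noteq> ({} :: (complex^'n^'n) set)"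
  shows "wk_parallel k (mat (complex_of_real \<gamma>)) B"
proof -
  define C :: "complex^'n^'n" where "C = mat (complex_of_real \<gamma>)"
  obtain Q where Q: "Q \<in> projs_of_trace k" and wB: "wk k B = cmod (trace (B ** Q))"
    by (rule wk_attained[OF assms(2), where A=B])
  have "Im (trace (B ** Q)) = 0"
    using trace_mult_hermitian_real[OF assms(1)] Q by (simp add: projs_of_trace_def orth_proj_def)
  then obtain s where s: "trace (B ** Q) = complex_of_real s"
    by (intro that[of "Re (trace (B ** Q))"]) (simp add: complex_eq_iff)
  define \<mu> :: real where "\<mu> = (if \<gamma> * s \<ge> 0 then 1 else -1)"
  have \<mu>: "\<bar>\<mu>\<bar> = 1" by (simp add: \<mu>_def)
  have trC: "trace (C ** R) = complex_of_real (\<gamma> * real k)" if "R \<in> projs_of_trace k" for R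
    using that by (simp add: C_def trace_mat_mult projs_of_trace_def)
  have wC: "wk k C = \<bar>\<gamma>\<bar> * real k"
    by (rule wk_eqI[OF Q]) (simp_all add: trC Q norm_mult)
  have "wk k (C + \<mu> *\<^sub>R B) = \<bar>\<gamma>\<bar> * real k + wk k B"
  proof (rule wk_eqI[OF Q])
    have "\<mu> * (\<gamma> * s) \<ge> 0" by (simp add: \<mu>_def)
    then have "0 \<le> real k * (\<mu> * (\<gamma> * s))" by simp
    then have "(\<gamma> * real k) * (\<mu> * s) \<ge> 0" by (simp add: algebra_simps)
    then have "\<bar>\<gamma> * real k + \<mu> * s\<bar> = \<bar>\<gamma>\<bar> * real k + \<bar>s\<bar>"
      using \<mu> by (simp add: abs_add_of_mult_nonneg abs_mult)
    moreover have "trace ((C + \<mu> *\<^sub>R B) ** Q) = complex_of_real (\<gamma> * real k + \<mu> * s)"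
      unfolding trace_add_scaleR_mult by (simp add: trC[OF Q] s scaleR_conv_of_real)
    ultimately show "cmod (trace ((C + \<mu> *\<^sub>R B) ** Q)) = \<bar>\<gamma>\<bar> * real k + wk k B"
      using wB s by (simp only: norm_of_real)
  next
    fix R :: "complex^'n^'n" assume R: "R \<in> projs_of_trace k"
    have "cmod (trace ((C + \<mu> *\<^sub>R B) ** R)) \<le> cmod (trace (C ** R)) + cmod (\<mu> *\<^sub>R trace (B ** R))"
      unfolding trace_add_scaleR_mult by (rule norm_triangle_ineq)
    also have "\<dots> \<le> \<bar>\<gamma>\<bar> * real k + wk k B"
      using norm_trace_mult_le_wk[OF R, where A=B] \<mu> by (simp add: trC[OF R] norm_mult)
    finally show "cmod (trace ((C + \<mu> *\<^sub>R B) ** R)) \<le> \<bar>\<gamma>\<bar> * real k + wk k B" .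
  qed
  moreover have "\<mu> \<in> {1, -1}" by (simp add: \<mu>_def)
  ultimately show ?thesis unfolding wk_parallel_def C_def[symmetric] using wC by auto
qed

lemma orth_proj_add:
  assumes "orth_proj P" "orth_proj Q" "P ** Q = 0"
  shows "orth_proj (P + Q)"
proof -
  have P: "conj_transpose P = P" "P ** P = P" and Q: "conj_transpose Q = Q" "Q ** Q = Q"
    using assms by (auto simp: orth_proj_iff_conj_transpose)
  have "Q ** P = conj_transpose (P ** Q)" by (simp add: conj_transpose_mult P Q)
  then have "Q ** P = 0" using assms(3) by (simp add: conj_transpose_def vec_eq_iff)
  then show ?thesis
    using assms(3) by (simp add: orth_proj_iff_conj_transpose conj_transpose_add P Q
        matrix_add_ldistrib matrix_add_rdistrib)
qed

definition diag_proj :: "'n set \<Rightarrow> complex^'n^'n" where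
  "diag_proj S = (\<chi> a b. if a = b \<and> a \<in> S then 1 else 0)"

lemma diag_proj_mult_nth: "(diag_proj S ** X)$a$b = (if a \<in> S then X$a$b else 0)"
  unfolding matrix_matrix_mult_def diag_proj_def
  by (cases "a \<in> S") (auto simp: if_distrib if_distribR cong: if_cong)

lemma mult_diag_proj_nth: "(X ** diag_proj S)$a$b = (if b \<in> S then X$a$b else 0)"
proof -
  have "(X ** diag_proj S)$a$b = (\<Sum>l\<in>UNIV. if l = b then (if b \<in> S then X$a$b else 0) else 0)"
    unfolding matrix_matrix_mult_def diag_proj_def vec_lambda_beta by (intro sum.cong) auto
  then show ?thesis by simp
qed

lemma orth_proj_diag_proj: "orth_proj (diag_proj S)"
  by (auto simp: orth_proj_def hermitian_def vec_eq_iff diag_proj_mult_nth) (auto simp: diag_proj_def)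

lemma trace_diag_proj: "trace (diag_proj S) = of_nat (card S)"
  by (simp add: trace_def diag_proj_def sum.If_cases)

lemma trace_mult_diag_proj: "trace (A ** diag_proj S) = (\<Sum>a\<in>S. A$a$a)"
  by (simp add: trace_def mult_diag_proj_nth sum.If_cases)

lemma projs_of_trace_nonempty:
  assumes "k \<le> CARD('n)"
  shows "projs_of_trace k \<noteq> ({} :: (complex^'n^'n) set)"
proof -
  obtain S :: "'n set" where "card S = k"
    using assms by (meson obtain_subset_with_card_n)
  then have "diag_proj S \<in> projs_of_trace k"
    by (simp add: projs_of_trace_def orth_proj_diag_proj trace_diag_proj)
  then show ?thesis by blast
qed

definition rank_one_proj :: "complex^'n \<Rightarrow> complex^'n^'n" where
  "rank_one_proj u = (\<chi> a b. u$a * cnj (u$b) / complex_of_real ((norm u)\<^sup>2))"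

lemma power2_norm_vec: "(norm x)\<^sup>2 = (\<Sum>i\<in>UNIV. (norm (x$i))\<^sup>2)"
  by (simp add: norm_vec_def L2_set_def sum_nonneg)

lemma sum_cnj_mult_self: "(\<Sum>l\<in>UNIV. cnj (u$l) * u$l) = complex_of_real ((norm u)\<^sup>2)"
  by (simp add: power2_norm_vec complex_norm_square mult.commute del: of_real_power)

lemma orth_proj_rank_one_proj:
  assumes "u \<noteq> 0"
  shows "orth_proj (rank_one_proj u)"
proof -
  have N: "complex_of_real ((norm u)\<^sup>2) \<noteq> 0" using assms by simp
  have "(rank_one_proj u ** rank_one_proj u)$a$b = rank_one_proj u $a$b" for a b
  proof -
    have "(rank_one_proj u ** rank_one_proj u)$a$b
        = u$a * cnj (u$b) / (complex_of_real ((norm u)\<^sup>2))\<^sup>2 * (\<Sum>l\<in>UNIV. cnj (u$l) * u$l)"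
      by (simp add: rank_one_proj_def matrix_matrix_mult_def sum_distrib_left sum_divide_distrib
          power2_eq_square mult_ac)
    also have "\<dots> = rank_one_proj u $a$b"
      using N by (simp add: sum_cnj_mult_self rank_one_proj_def power2_eq_square)
    finally show ?thesis .
  qed
  then show ?thesis
    by (simp add: orth_proj_def hermitian_def vec_eq_iff rank_one_proj_def mult.commute)
qed

lemma trace_rank_one_proj:
  assumes "u \<noteq> 0"
  shows "trace (rank_one_proj u) = 1"
  using assms sum_cnj_mult_self[of u]
  by (simp add: trace_def rank_one_proj_def sum_divide_distrib[symmetric] mult.commute)

lemma trace_mult_rank_one_proj:
  "trace (A ** rank_one_proj u)
    = (\<Sum>a\<in>UNIV. \<Sum>b\<in>UNIV. cnj (u$a) * A$a$b * u$b) / complex_of_real ((norm u)\<^sup>2)"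
  by (simp add: trace_def rank_one_proj_def matrix_matrix_mult_def
      sum_divide_distrib mult_ac)

lemma diag_proj_mult_rank_one_proj:
  "(\<And>a. a \<in> S \<Longrightarrow> u$a = 0) \<Longrightarrow> diag_proj S ** rank_one_proj u = 0"
  by (simp add: vec_eq_iff diag_proj_mult_nth rank_one_proj_def)

lemma vec_independent_diagonal:
  fixes f :: "'n \<Rightarrow> 'a::field^'n"
  assumes "finite I"
    and off: "\<And>a b. a \<in> I \<Longrightarrow> b \<in> I \<Longrightarrow> a \<noteq> b \<Longrightarrow> f a $ b = 0"
    and diag: "\<And>a. a \<in> I \<Longrightarrow> f a $ a \<noteq> 0"
  shows "vec.independent (f ` I)" "card (f ` I) = card I"
proof -
  have inj: "inj_on f I"
    by (rule inj_onI) (metis diag off)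
  then show "card (f ` I) = card I" by (rule card_image)
  show "vec.independent (f ` I)"
    unfolding vec.independent_explicit
  proof (intro conjI allI impI ballI)
    show "finite (f ` I)" using assms(1) by simp
    fix c v assume sum0: "(\<Sum>v\<in>f ` I. c v *s v) = 0" and "v \<in> f ` I"
    then obtain b where b: "b \<in> I" "v = f b" by blast
    have "(\<Sum>a\<in>I. c (f a) *s f a) = 0" using sum0 by (simp add: sum.reindex[OF inj])
    then have "(\<Sum>a\<in>I. c (f a) *s f a) $ b = 0" by simp
    moreover have "(\<Sum>a\<in>I. c (f a) *s f a) $ b = c (f b) * f b $ b"
      using assms(1) b(1) off by (simp add: sum.remove)
    ultimately show "c v = 0" using diag[OF b(1)] b(2) by simp
  qed
qed

text \<open>With \<open>u$i \<noteq> 0\<close>, the rows indexed by \<open>insert i S\<close> form a basis of the row space: every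
  other row is a multiple of row \<open>i\<close>.\<close>
lemma rank_diag_proj_add_rank_one_proj:
  assumes "u \<noteq> 0" and u_S: "\<And>a. a \<in> S \<Longrightarrow> u$a = 0"
  shows "rank (diag_proj S + rank_one_proj u) = card S + 1"
proof -
  let ?P = "diag_proj S + rank_one_proj u"
  obtain i where ui: "u$i \<noteq> 0" using assms(1) by (metis vec_eq_iff zero_index)
  then have iS: "i \<notin> S" using u_S by blast
  let ?I = "insert i S" and ?f = "\<lambda>a. row a ?P"
  have off: "?f a $ b = 0" if "a \<in> ?I" "b \<in> ?I" "a \<noteq> b" for a b
    using that u_S by (auto simp: row_def diag_proj_def rank_one_proj_def)
  have diag: "?f a $ a \<noteq> 0" if "a \<in> ?I" for a
    using that iS ui u_S assms(1) by (auto simp: row_def diag_proj_def rank_one_proj_def)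
  have fin: "finite ?I" by simp
  note ind = vec_independent_diagonal[OF fin off diag]
  have span: "rows ?P \<subseteq> vec.span (?f ` ?I)"
  proof
    fix v assume "v \<in> rows ?P"
    then obtain a where v: "v = row a ?P" by (auto simp: rows_def)
    show "v \<in> vec.span (?f ` ?I)"
    proof (cases "a \<in> ?I")
      case True
      then show ?thesis using v by (intro vec.span_base) auto
    next
      case False
      then have "row a ?P = (u$a / u$i) *s row i ?P"
        using iS ui by (auto simp: vec_eq_iff row_def diag_proj_def rank_one_proj_def)
      moreover have "row i ?P \<in> vec.span (?f ` ?I)" by (intro vec.span_base) auto
      ultimately show ?thesis using v by (simp add: vec.span_scale)
    qed
  qed
  have "vec.dim (rows ?P) = card (?f ` ?I)"
    by (rule vec.dim_unique[OF _ span ind(1)]) (auto simp: rows_def)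
  then show ?thesis using ind(2) iS by (simp add: row_rank_def_gen)
qed

lemma sum_UNIV_two_points:
  assumes "i \<noteq> j" "\<And>l. l \<noteq> i \<Longrightarrow> l \<noteq> j \<Longrightarrow> g l = 0"
  shows "sum g (UNIV :: 'n::finite set) = g i + g j"
proof -
  have "sum g UNIV = sum g {i, j}"
    by (rule sum.mono_neutral_right) (use assms in auto)
  then show ?thesis using assms(1) by simp
qed

lemma Re_trace_mult_rank_one_proj_axis:
  fixes A :: "complex^'n^'n"
  assumes "hermitian A" "i \<noteq> j"
  shows "Re (trace (A ** rank_one_proj (axis i p + axis j q)))
    = ((cmod p)\<^sup>2 * Re (A$i$i) + (cmod q)\<^sup>2 * Re (A$j$j) + 2 * Re (cnj p * q * A$i$j))
      / ((cmod p)\<^sup>2 + (cmod q)\<^sup>2)"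
proof -
  define u where "u = axis i p + axis j q"
  have u: "u$i = p" "u$j = q" "\<And>l. l \<noteq> i \<Longrightarrow> l \<noteq> j \<Longrightarrow> u$l = 0"
    using assms(2) by (simp_all add: u_def axis_def)
  have norm: "(norm u)\<^sup>2 = (cmod p)\<^sup>2 + (cmod q)\<^sup>2"
    unfolding power2_norm_vec by (subst sum_UNIV_two_points[OF assms(2)]) (simp_all add: u)
  have inner: "(\<Sum>b\<in>UNIV. cnj (u$a) * A$a$b * u$b) = cnj (u$a) * A$a$i * p + cnj (u$a) * A$a$j * q"
    for a by (subst sum_UNIV_two_points[OF assms(2)]) (simp_all add: u)
  have quad: "(\<Sum>a\<in>UNIV. \<Sum>b\<in>UNIV. cnj (u$a) * A$a$b * u$b)
      = cnj p * A$i$i * p + cnj p * A$i$j * q + (cnj q * A$j$i * p + cnj q * A$j$j * q)"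
    unfolding inner by (subst sum_UNIV_two_points[OF assms(2)]) (simp_all add: u)
  have diag: "cnj z * A$l$l * z = complex_of_real ((cmod z)\<^sup>2) * A$l$l" for z l
    by (simp add: complex_norm_square mult_ac del: of_real_power)
  define z where "z = cnj p * q * A$i$j"
  have "A$j$i = cnj (A$i$j)" using assms(1) unfolding hermitian_def by blast
  then have z: "cnj p * A$i$j * q = z" "cnj q * A$j$i * p = cnj z"
    by (simp_all add: z_def mult_ac)
  have "Re (trace (A ** rank_one_proj u))
      = Re (complex_of_real ((cmod p)\<^sup>2) * A$i$i + z + (cnj z + complex_of_real ((cmod q)\<^sup>2) * A$j$j))
        / ((cmod p)\<^sup>2 + (cmod q)\<^sup>2)"
    unfolding trace_mult_rank_one_proj quad norm diag z Re_divide_of_real ..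
  also have "\<dots> = ((cmod p)\<^sup>2 * Re (A$i$i) + (cmod q)\<^sup>2 * Re (A$j$j) + 2 * Re z)
      / ((cmod p)\<^sup>2 + (cmod q)\<^sup>2)"
    by simp
  finally show ?thesis unfolding u_def z_def .
qed

lemma abs_eq_at_five_points:
  fixes x a b r w :: real
  assumes "\<bar>x + a\<bar> = w" "\<bar>x + b\<bar> = w" "\<bar>x + (a + b + 2 * r) / 2\<bar> = w"
    "\<bar>x + (a + b - 2 * r) / 2\<bar> = w" "\<bar>x + (4 * a + b + 4 * r) / 5\<bar> = w"
  shows "a = b \<and> r = 0"
  using assms by (auto simp: abs_if field_simps split: if_splits)

lemma wk_parallel_rank_projs_imp_entries:
  fixes A :: "complex^'n^'n"
  assumes "1 \<le> k" "k < CARD('n)" "hermitian A"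
    and par: "\<forall>P::complex^'n^'n. orth_proj P \<and> rank P = k \<longrightarrow> wk_parallel k A P"
    and "i \<noteq> j"
  shows "Re (A$i$i) = Re (A$j$j) \<and> A$i$j = 0"
proof -
  have "k - 1 \<le> card (UNIV - {i, j})" using assms(1,2,5) by (simp add: card_Diff_subset)
  then obtain S where S: "S \<subseteq> UNIV - {i, j}" "card S = k - 1" by (rule obtain_subset_with_card_n)
  define X where "X = Re (\<Sum>a\<in>S. A$a$a)"
  define f where "f p q = ((cmod p)\<^sup>2 * Re (A$i$i) + (cmod q)\<^sup>2 * Re (A$j$j) + 2 * Re (cnj p * q * A$i$j))
    / ((cmod p)\<^sup>2 + (cmod q)\<^sup>2)" for p q
  text \<open>Test \<open>A\<close> against the rank-\<open>k\<close> projection onto \<open>span {e\<^sub>a | a \<in> S} \<oplus> span {p e\<^sub>i + q e\<^sub>j}\<close>.\<close>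
  have val: "\<bar>X + f p q\<bar> = wk k A" if "p \<noteq> 0 \<or> q \<noteq> 0" for p q
  proof -
    define u where "u = axis i p + axis j q"
    define P where "P = diag_proj S + rank_one_proj u"
    have "u$i = p" "u$j = q" using assms(5) by (simp_all add: u_def axis_def)
    then have "u \<noteq> 0" using that by auto
    have u_S: "u$a = 0" if "a \<in> S" for a using that S(1) by (auto simp: u_def axis_def)
    have P: "orth_proj P"
      unfolding P_def using \<open>u \<noteq> 0\<close> u_S
      by (intro orth_proj_add orth_proj_diag_proj orth_proj_rank_one_proj diag_proj_mult_rank_one_proj)
    moreover have "trace P = of_nat k" "rank P = k"
      using S(2) assms(1) \<open>u \<noteq> 0\<close> u_S
      by (simp_all add: P_def trace_add trace_diag_proj trace_rank_one_proj rank_diag_proj_add_rank_one_proj)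
    ultimately have "cmod (trace (A ** P)) = wk k A"
      using par by (intro wk_parallel_orth_proj_attains) (auto simp: projs_of_trace_def)
    moreover have "Im (trace (A ** P)) = 0"
      using P assms(3) by (simp add: orth_proj_def trace_mult_hermitian_real)
    moreover have "Re (trace (A ** P)) = X + f p q"
      by (simp add: P_def u_def X_def f_def matrix_add_ldistrib trace_add trace_mult_diag_proj
          Re_trace_mult_rank_one_proj_axis[OF assms(3,5)])
    ultimately show ?thesis by (simp add: cmod_eq_Re)
  qed
  have "Re (A$i$i) = Re (A$j$j) \<and> Re (A$i$j) = 0"
    by (rule abs_eq_at_five_points[of X _ "wk k A"])
      (use val[of 1 0] val[of 0 1] val[of 1 1] val[of 1 "-1"] val[of 2 1] in \<open>simp_all add: f_def\<close>)
  moreover have "Re (A$i$i) = Re (A$j$j) \<and> - Im (A$i$j) = 0"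
    by (rule abs_eq_at_five_points[of X _ "wk k A"])
      (use val[of 1 0] val[of 0 1] val[of 1 \<i>] val[of 1 "-\<i>"] val[of 2 \<i>] in \<open>simp_all add: f_def\<close>)
  ultimately show ?thesis by (simp add: complex_eq_iff)
qed

lemma hermitian_eq_scalar_matrix:
  fixes A :: "complex^'n^'n"
  assumes "hermitian A" and entries: "\<And>i j. i \<noteq> j \<Longrightarrow> Re (A$i$i) = Re (A$j$j) \<and> A$i$j = 0"
  shows "A = mat (complex_of_real (Re (A$i$i)))"
proof -
  have "Im (A$a$a) = 0" for a
    using assms(1) unfolding hermitian_def by (metis cnj.simps(2) neg_equal_zero)
  moreover have "Re (A$a$a) = Re (A$i$i)" for a
    using entries[of a i] by (cases "a = i") auto
  ultimately show ?thesis
    using entries by (auto simp: vec_eq_iff mat_def complex_eq_iff)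
qed

theorem mainTheorem13:
  fixes A :: "complex^'n^'n" and k :: nat
  assumes "1 \<le> k" and "k < CARD('n)" and "hermitian A"
  shows "((\<exists>\<gamma>::real. A = mat (complex_of_real \<gamma>))
          \<longleftrightarrow> (\<forall>B::complex^'n^'n. hermitian B \<longrightarrow> wk_parallel k A B))
       \<and> ((\<forall>B::complex^'n^'n. hermitian B \<longrightarrow> wk_parallel k A B)
          \<longleftrightarrow> (\<forall>P::complex^'n^'n. orth_proj P \<and> rank P = k \<longrightarrow> wk_parallel k A P))"
proof -
  have "projs_of_trace k \<noteq> ({} :: (complex^'n^'n) set)"
    using assms(2) by (intro projs_of_trace_nonempty) simp
  then have a_b: "\<forall>B::complex^'n^'n. hermitian B \<longrightarrow> wk_parallel k A B"
    if "\<exists>\<gamma>::real. A = mat (complex_of_real \<gamma>)"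
    using that wk_parallel_scalar_matrix by blast
  have b_c: "\<forall>P::complex^'n^'n. orth_proj P \<and> rank P = k \<longrightarrow> wk_parallel k A P"
    if "\<forall>B::complex^'n^'n. hermitian B \<longrightarrow> wk_parallel k A B"
    using that by (simp add: orth_proj_def)
  have c_a: "\<exists>\<gamma>::real. A = mat (complex_of_real \<gamma>)"
    if "\<forall>P::complex^'n^'n. orth_proj P \<and> rank P = k \<longrightarrow> wk_parallel k A P"
    using hermitian_eq_scalar_matrix[OF assms(3) wk_parallel_rank_projs_imp_entries[OF assms that]] by blast
  show ?thesis using a_b b_c c_a by blast
qed

end
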